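(* Let $\alpha\geq 0$ and set $$f_{\alpha}(x)=\begin{cases} 0 & x<\sigma_0\\ \frac{2}{\alpha}(x-\sigma_0) & \sigma_0\leq x < (1+\frac{\alpha}{2})\sigma_0\\ (1+\frac{\alpha}{2})^{-1}x & (1+\frac{\alpha}{2})\sigma_0\leq x. \end{cases}$$ Then $\mathfrak{S}_{f_{\alpha}}(F)$ solves $$\operatorname{arg\,min}_X \mathscr{N}_F^{**}(X)+\frac{\alpha}{2} \|X\|_2^2,$$ where $\mathscr{N}_F^{**}(X)= \sum_j\left( \sigma_0^2-\left(\max\left(\sigma_0-\sigma_j(X),0\right)\right)^2\right) + \|X-F\|_2^2$.
   Context: $X,F$ are $M\times N$ matrices, $\|\cdot\|_2$ is the Frobenius norm, $\sigma_j(X)$ are the singular values of $X$, and $\sigma_0>0$ is a parameter. $\mathscr{N}_F^{**}$ is the convex envelope of $\mathscr{N}_F(X)=\sigma_0^2\operatorname{rank}(X)+\|X-F\|_2^2$. If $F=U\Sigma_\phi V^*$ is a singular value decomposition with singular values $\phi=(\phi_j)$, then for $f:[0,\infty)\to\mathbb{C}$, $\mathfrak{S}_f(F)=U\Sigma_{f(\phi)}V^*$, i.e. the singular values $\phi_j$ are replaced by $f(\phi_j)$. *)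

theory Defs
  imports "Jordan_Normal_Form.Schur_Decomposition" "HOL-Computational_Algebra.Polynomial"
begin

definition frob_sq :: "complex mat \<Rightarrow> real" where
  "frob_sq X = (\<Sum>i<dim_row X. \<Sum>j<dim_col X. (cmod (X $$ (i,j)))\<^sup>2)"

definition singular_values :: "complex mat \<Rightarrow> real multiset" where
  "singular_values X =
     image_mset (\<lambda>z. sqrt (Re z))
       (proots (char_poly (if dim_col X \<le> dim_row X then mat_adjoint X * X
                           else X * mat_adjoint X)))"

definition N_F_star :: "real \<Rightarrow> complex mat \<Rightarrow> complex mat \<Rightarrow> real" where
  "N_F_star s0 F X =
     (\<Sum>s\<in>#singular_values X. s0\<^sup>2 - (max (s0 - s) 0)\<^sup>2) + frob_sq (X - F)"

definition unitary_mat :: "nat \<Rightarrow> complex mat \<Rightarrow> bool" where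
  "unitary_mat n U \<longleftrightarrow> U \<in> carrier_mat n n \<and> mat_adjoint U * U = 1\<^sub>m n"

definition diag_rect :: "nat \<Rightarrow> nat \<Rightarrow> (nat \<Rightarrow> complex) \<Rightarrow> complex mat" where
  "diag_rect M N d = mat M N (\<lambda>(i,j). if i = j then d i else 0)"

definition is_svd :: "nat \<Rightarrow> nat \<Rightarrow> complex mat \<Rightarrow> complex mat \<Rightarrow> (nat \<Rightarrow> real) \<Rightarrow> complex mat \<Rightarrow> bool" where
  "is_svd M N F U \<phi> V \<longleftrightarrow> F \<in> carrier_mat M N \<and> unitary_mat M U \<and> unitary_mat N V \<and>
     (\<forall>j < min M N. \<phi> j \<ge> 0) \<and>
     F = U * diag_rect M N (\<lambda>j. complex_of_real (\<phi> j)) * mat_adjoint V"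

definition S_fun :: "nat \<Rightarrow> nat \<Rightarrow> (real \<Rightarrow> complex) \<Rightarrow> complex mat \<Rightarrow> (nat \<Rightarrow> real) \<Rightarrow> complex mat \<Rightarrow> complex mat" where
  "S_fun M N f U \<phi> V = U * diag_rect M N (\<lambda>j. f (\<phi> j)) * mat_adjoint V"

definition f_alpha :: "real \<Rightarrow> real \<Rightarrow> real \<Rightarrow> real" where
  "f_alpha s0 \<alpha> x =
     (if x < s0 then 0
      else if x < (1 + \<alpha>/2) * s0 then (2/\<alpha>) * (x - s0)
      else x / (1 + \<alpha>/2))"

end

theory Submission
  imports Defs
begin

text \<open>Both terms of the objective are invariant under \<open>X \<mapsto> U X V\<^sup>*\<close> for unitary \<open>U\<close>, \<open>V\<close>,
  so \<open>F\<close> may be taken diagonal with entries \<open>\<phi>\<^sub>j\<close>; wide matrices reduce to tall ones by taking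
  adjoints. In terms of the singular values \<open>\<sigma>\<^sub>k\<close> of \<open>X\<close> the objective is
  \<open>\<Sum>\<^sub>k g(\<sigma>\<^sub>k) - 2 Re \<langle>X, F\<rangle> + \<parallel>F\<parallel>\<^sup>2\<close> with \<open>g(s) = 2 s0 s + (s - s0)\<^sub>+\<^sup>2 + \<alpha>/2 s\<^sup>2\<close> convex and
  nondecreasing. The moduli of the diagonal entries of \<open>X\<close> are bounded by doubly substochastic averages
  of the \<open>\<sigma>\<^sub>k\<close> (Bessel's inequality and AM-GM), hence \<open>\<Sum>\<^sub>k g(\<sigma>\<^sub>k) \<ge> \<Sum>\<^sub>j g(|X\<^sub>j\<^sub>j|)\<close>, while
  \<open>Re \<langle>X, F\<rangle> \<le> \<Sum>\<^sub>j \<phi>\<^sub>j |X\<^sub>j\<^sub>j|\<close>. The problem thus decouples into minimising \<open>g(x) - 2 \<phi>\<^sub>j x\<close> over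
  \<open>x \<ge> 0\<close>, which \<open>x = f\<^sub>\<alpha>(\<phi>\<^sub>j)\<close> does, and the diagonal matrix with these entries attains every bound.\<close>

section \<open>Adjoints and unitary matrices\<close>

lemma mat_adjoint_dim [simp]:
  "dim_row (mat_adjoint A) = dim_col A" "dim_col (mat_adjoint A) = dim_row A"
  unfolding mat_adjoint_def by (auto simp: cols_def)

lemma index_mat_adjoint [simp]:
  "i < dim_col A \<Longrightarrow> j < dim_row A \<Longrightarrow> mat_adjoint (A :: complex mat) $$ (i,j) = cnj (A $$ (j,i))"
  unfolding mat_adjoint_def by (auto simp: cols_def mat_of_rows_index)

lemma mat_adjoint_carrier_iff [simp]: "mat_adjoint A \<in> carrier_mat n m \<longleftrightarrow> A \<in> carrier_mat m n"
  unfolding carrier_mat_def by auto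

lemma mat_adjoint_adjoint [simp]: "mat_adjoint (mat_adjoint (A :: complex mat)) = A"
  by (rule eq_matI) auto

lemma mat_adjoint_one [simp]: "mat_adjoint (1\<^sub>m n :: complex mat) = 1\<^sub>m n"
  by (rule eq_matI) auto

lemma index_mult_mat_sum:
  "i < dim_row A \<Longrightarrow> j < dim_col B \<Longrightarrow> dim_col A = dim_row B \<Longrightarrow>
   (A * B) $$ (i,j) = (\<Sum>k<dim_row B. A $$ (i,k) * B $$ (k,j))"
  by (simp add: index_mult_mat scalar_prod_def atLeast0LessThan)

declare index_mult_mat(1)[simp del]

lemma mat_adjoint_mult:
  assumes "(A :: complex mat) \<in> carrier_mat m n" "B \<in> carrier_mat n k"
  shows "mat_adjoint (A * B) = mat_adjoint B * mat_adjoint A"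
  using assms
  by (intro eq_matI) (auto simp: index_mult_mat_sum mult.commute cnj_sum)

lemma mat_adjoint_minus:
  assumes "(A :: complex mat) \<in> carrier_mat m n" "B \<in> carrier_mat m n"
  shows "mat_adjoint (A - B) = mat_adjoint A - mat_adjoint B"
  using assms by (intro eq_matI) auto

lemma mat_adjoint_mult_mult_adjoint:
  assumes "U \<in> carrier_mat m m" "(D :: complex mat) \<in> carrier_mat m n" "V \<in> carrier_mat n n"
  shows "mat_adjoint (U * D * mat_adjoint V) = V * mat_adjoint D * mat_adjoint U"
proof -
  have "mat_adjoint (U * D * mat_adjoint V) = V * (mat_adjoint D * mat_adjoint U)"
    using assms by (simp add: mat_adjoint_mult[of _ m n _ n] mat_adjoint_mult[of _ m m _ n])
  thus ?thesis using assms by (simp add: assoc_mult_mat[of _ n n _ n _ m])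
qed


lemma unitary_mat_right_inverse:
  "unitary_mat n U \<Longrightarrow> U * mat_adjoint U = 1\<^sub>m n"
  unfolding unitary_mat_def by (auto intro: mat_mult_left_right_inverse)

lemma unitary_mat_adjoint: "unitary_mat n U \<Longrightarrow> unitary_mat n (mat_adjoint U)"
  using unitary_mat_right_inverse unfolding unitary_mat_def by auto

lemma unitary_mat_mult:
  assumes "unitary_mat n U" "unitary_mat n V"
  shows "unitary_mat n (U * V)"
proof -
  have c: "U \<in> carrier_mat n n" "V \<in> carrier_mat n n" "mat_adjoint U \<in> carrier_mat n n"
    "mat_adjoint V \<in> carrier_mat n n" using assms unfolding unitary_mat_def by auto
  have "mat_adjoint (U * V) * (U * V) = mat_adjoint V * (mat_adjoint U * U) * V"
    using c by (simp add: mat_adjoint_mult[of _ n n _ n] assoc_mult_mat[of _ n n _ n _ n])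
  thus ?thesis using assms c unfolding unitary_mat_def by auto
qed

lemma unitary_conj_cancel:
  assumes "unitary_mat n U" "A \<in> carrier_mat n n"
  shows "mat_adjoint U * (U * A * mat_adjoint U) * U = A"
proof -
  have c: "U \<in> carrier_mat n n" "mat_adjoint U \<in> carrier_mat n n"
    using assms unfolding unitary_mat_def by auto
  have "mat_adjoint U * (U * A * mat_adjoint U) * U
      = (mat_adjoint U * U) * A * (mat_adjoint U * U)"
    using c assms by (simp add: assoc_mult_mat[of _ n n _ n _ n])
  thus ?thesis using assms unfolding unitary_mat_def by simp
qed

lemma unitary_conj_trans:
  assumes W: "unitary_mat n W" and P: "unitary_mat n P" and A: "A \<in> carrier_mat n n"
    and C: "C \<in> carrier_mat n n" and WAW: "mat_adjoint W * A * W = P * C * mat_adjoint P"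
  shows "A = (W * P) * C * mat_adjoint (W * P)"
proof -
  have c: "W \<in> carrier_mat n n" "mat_adjoint W \<in> carrier_mat n n"
    "P \<in> carrier_mat n n" "mat_adjoint P \<in> carrier_mat n n"
    using W P unfolding unitary_mat_def by auto
  have "A = W * (mat_adjoint W * A * W) * mat_adjoint W"
    using unitary_conj_cancel[OF unitary_mat_adjoint[OF W] A] by simp
  also have "\<dots> = (W * P) * C * mat_adjoint (W * P)"
    unfolding WAW using c C by (simp add: mat_adjoint_mult[of _ n n _ n] assoc_mult_mat[of _ n n _ n _ n])
  finally show ?thesis .
qed

lemma similar_mat_unitary_conj:
  assumes "unitary_mat n U" "A \<in> carrier_mat n n"
  shows "similar_mat (U * A * mat_adjoint U) A"
proof -
  have c: "U \<in> carrier_mat n n" "mat_adjoint U \<in> carrier_mat n n"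
    using assms unfolding unitary_mat_def by auto
  have "similar_mat_wit (U * A * mat_adjoint U) A U (mat_adjoint U)"
    using assms c unitary_mat_right_inverse[OF assms(1)]
    by (intro similar_mat_witI[of _ _ n]) (auto simp: unitary_mat_def)
  thus ?thesis unfolding similar_mat_def by blast
qed

section \<open>Unitary Schur decomposition\<close>

definition vec_normalize :: "complex vec \<Rightarrow> complex vec" where
  "vec_normalize w = complex_of_real (1 / sqrt (Re (w \<bullet>c w))) \<cdot>\<^sub>v w"

lemma vec_normalize_carrier [simp]: "w \<in> carrier_vec n \<Longrightarrow> vec_normalize w \<in> carrier_vec n"
  unfolding vec_normalize_def by auto

lemma cscalar_prod_self_real:
  fixes w :: "complex vec"
  shows "w \<bullet>c w = complex_of_real (Re (w \<bullet>c w))" "Re (w \<bullet>c w) \<ge> 0"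
proof -
  have "w \<bullet>c w \<ge> 0" by auto
  thus "w \<bullet>c w = complex_of_real (Re (w \<bullet>c w))" "Re (w \<bullet>c w) \<ge> 0"
    by (auto simp: less_eq_complex_def complex_eq_iff)
qed

lemma cscalar_prod_vec_normalize:
  assumes "w \<in> carrier_vec n" "u \<in> carrier_vec n"
  shows "vec_normalize w \<bullet>c vec_normalize u
    = complex_of_real (1 / sqrt (Re (w \<bullet>c w)) * (1 / sqrt (Re (u \<bullet>c u)))) * (w \<bullet>c u)"
proof -
  have "(complex_of_real c \<cdot>\<^sub>v w) \<bullet>c (complex_of_real d \<cdot>\<^sub>v u) = complex_of_real (c * d) * (w \<bullet>c u)"
    for c d using assms by (simp add: scalar_prod_def sum_distrib_left algebra_simps)
  thus ?thesis unfolding vec_normalize_def .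
qed

lemma cscalar_prod_self_pos:
  fixes w :: "complex vec"
  assumes "w \<bullet>c w \<noteq> 0"
  shows "Re (w \<bullet>c w) > 0"
  using cscalar_prod_self_real[of w] assms by (metis less_eq_real_def of_real_0)

lemma vec_normalize_self:
  assumes "w \<in> carrier_vec n" "w \<bullet>c w \<noteq> 0"
  shows "vec_normalize w \<bullet>c vec_normalize w = 1"
proof -
  let ?r = "Re (w \<bullet>c w)"
  have "vec_normalize w \<bullet>c vec_normalize w = complex_of_real (1 / sqrt ?r * (1 / sqrt ?r) * ?r)"
    unfolding cscalar_prod_vec_normalize[OF assms(1) assms(1)]
    by (subst cscalar_prod_self_real(1)) simp
  also have "1 / sqrt ?r * (1 / sqrt ?r) * ?r = 1"
    using cscalar_prod_self_pos[OF assms(2)] by (simp add: field_simps)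
  finally show ?thesis by simp
qed

lemma corthogonal_map_vec_normalize:
  assumes "corthogonal ws" "set ws \<subseteq> carrier_vec n"
  shows "corthogonal (map vec_normalize ws)"
proof (rule corthogonalI)
  fix i j assume "i < length (map vec_normalize ws)" "j < length (map vec_normalize ws)"
  hence i: "i < length ws" and j: "j < length ws" by auto
  have c: "ws ! i \<in> carrier_vec n" "ws ! j \<in> carrier_vec n" using assms(2) i j by auto
  have "Re (ws ! i \<bullet>c ws ! i) > 0" "Re (ws ! j \<bullet>c ws ! j) > 0"
    using corthogonalD[OF assms(1) i i] corthogonalD[OF assms(1) j j]
    by (auto intro: cscalar_prod_self_pos)
  thus "(map vec_normalize ws ! i \<bullet>c map vec_normalize ws ! j = 0) = (i \<noteq> j)"
    using corthogonalD[OF assms(1) i j] by (simp add: i j cscalar_prod_vec_normalize[OF c])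
qed

lemma corthogonal_inv_normalized:
  assumes "corthogonal ws" "set ws \<subseteq> carrier_vec n" "length ws = n"
  shows "corthogonal_inv (mat_of_cols n (map vec_normalize ws))
       = mat_adjoint (mat_of_cols n (map vec_normalize ws))"
proof -
  have "vec_inv (vec_normalize w) = conjugate (vec_normalize w)" if "w \<in> set ws" for w
  proof -
    obtain i where i: "i < length ws" and w: "w = ws ! i" using \<open>w \<in> set ws\<close> by (auto simp: in_set_conv_nth)
    have "ws ! i \<in> carrier_vec n" "ws ! i \<bullet>c ws ! i \<noteq> 0"
      using assms corthogonalD[OF assms(1) i i] i by auto
    from vec_normalize_self[OF this] show ?thesis unfolding w vec_inv_def by simp
  qed
  hence "map (\<lambda>w. vec_inv (vec_normalize w)) ws = map (\<lambda>w. conjugate (vec_normalize w)) ws"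
    by simp
  moreover have "set (map vec_normalize ws) \<subseteq> carrier_vec n" using assms by auto
  ultimately show ?thesis unfolding corthogonal_inv_def mat_adjoint_def using assms
    by (simp add: cols_mat_of_cols o_def cong: map_cong)
qed

lemma unitary_basis_completion:
  assumes v0: "v0 \<in> carrier_vec n" "v0 \<noteq> 0\<^sub>v n"
  shows "\<exists>ws. set ws \<subseteq> carrier_vec n \<and> corthogonal ws \<and> length ws = n \<and> hd ws = vec_normalize v0 \<and>
    unitary_mat n (mat_of_cols n ws) \<and> corthogonal_inv (mat_of_cols n ws) = mat_adjoint (mat_of_cols n ws)"
proof -
  define b where "b = basis_completion v0"
  define ws0 where "ws0 = gram_schmidt n b"
  define ws where "ws = map vec_normalize ws0"
  interpret cof_vec_space n "TYPE(complex)" .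
  from basis_completion[OF v0, folded b_def]
  have b: "distinct b" "\<not> lin_dep (set b)" "set b \<subseteq> carrier_vec n" "hd b = v0" "length b = n"
    by auto
  have "n \<noteq> 0" using v0 by auto
  then obtain vs where bv: "b = v0 # vs" using b by (cases b) auto
  have ws0: "set ws0 \<subseteq> carrier_vec n" "corthogonal ws0" "length ws0 = n" "hd ws0 = v0"
    using gram_schmidt_result[OF b(3,1,2) refl] gram_schmidt_hd[OF v0(1), of vs] b
    unfolding ws0_def bv by auto
  have ws: "set ws \<subseteq> carrier_vec n" "corthogonal ws" "length ws = n"
    using ws0 corthogonal_map_vec_normalize[OF ws0(2,1)] unfolding ws_def by auto
  have "hd ws = vec_normalize v0" unfolding ws_def using ws0(3,4) \<open>n \<noteq> 0\<close> by (cases ws0) auto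
  moreover have W'adj: "corthogonal_inv (mat_of_cols n ws) = mat_adjoint (mat_of_cols n ws)"
    unfolding ws_def by (rule corthogonal_inv_normalized[OF ws0(2,1,3)])
  moreover have "inverts_mat (corthogonal_inv (mat_of_cols n ws)) (mat_of_cols n ws)"
    using corthogonal_inv_result orthogonal_mat_of_cols ws by blast
  hence "unitary_mat n (mat_of_cols n ws)"
    using ws unfolding unitary_mat_def inverts_mat_def W'adj by auto
  ultimately show ?thesis using ws by blast
qed

lemma unitary_eigenvector_deflation:
  assumes A: "(A :: complex mat) \<in> carrier_mat n n" and n: "n \<noteq> 0" and e: "eigenvalue A e"
  shows "\<exists>W A2 A3. unitary_mat n W \<and> A2 \<in> carrier_mat 1 (n - 1) \<and> A3 \<in> carrier_mat (n - 1) (n - 1) \<and>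
    mat_adjoint W * A * W = four_block_mat (mat 1 1 (\<lambda>_. e)) A2 (0\<^sub>m (n - 1) 1) A3"
proof -
  obtain v0 where v0: "v0 \<in> carrier_vec n" "v0 \<noteq> 0\<^sub>v n" "A *\<^sub>v v0 = e \<cdot>\<^sub>v v0"
    using find_eigenvector[OF A e] A unfolding eigenvector_def by auto
  define v where "v = vec_normalize v0"
  obtain ws where ws: "set ws \<subseteq> carrier_vec n" "corthogonal ws" "length ws = n" "hd ws = v"
    and unitary: "unitary_mat n (mat_of_cols n ws)"
    and W'adj: "corthogonal_inv (mat_of_cols n ws) = mat_adjoint (mat_of_cols n ws)"
    using unitary_basis_completion[OF v0(1,2)] unfolding v_def by blast
  define W where "W = mat_of_cols n ws"
  define A' where "A' = mat_adjoint W * A * W"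
  have v: "v \<in> carrier_vec n" "v \<noteq> 0\<^sub>v n"
    using v0 vec_normalize_self[OF v0(1)] conjugate_square_eq_0_vec[OF v0(1)]
    unfolding v_def by (auto simp: vec_normalize_def)
  have eigen: "A *\<^sub>v v = e \<cdot>\<^sub>v v" unfolding v_def vec_normalize_def
    using v0 A by (simp add: mult_mat_vec smult_smult_assoc mult.commute)
  have A': "A' \<in> carrier_mat n n" using ws A unfolding A'_def W_def by auto
  have col0: "col A' 0 = vec n (\<lambda>i. if i = 0 then e else 0)"
    using corthogonal_col_ev_0[OF A v eigen n ws(4,1,2,3)] unfolding A'_def W_def W'adj .
  obtain A1 A2 A0 A3 where split: "split_block A' 1 1 = (A1,A2,A0,A3)"
    by (cases "split_block A' 1 1") auto
  from A' n have "dim_row A' = 1 + (n - 1)" "dim_col A' = 1 + (n - 1)" by auto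
  from split_block[OF split this]
  have A2: "A2 \<in> carrier_mat 1 (n - 1)" and A3: "A3 \<in> carrier_mat (n - 1) (n - 1)"
    and A'block: "A' = four_block_mat A1 A2 A0 A3" by auto
  have "A1 = mat 1 1 (\<lambda>_. e)"
    using split[unfolded split_block_def Let_def] arg_cong[OF col0, of "\<lambda>v. v $ 0"] A' n
    by (auto simp: col_def)
  moreover have "A' $$ (Suc i, 0) = 0" if "i < n - 1" for i
    using arg_cong[OF col0, of "\<lambda>v. v $ Suc i"] A' that by auto
  hence "A0 = 0\<^sub>m (n - 1) 1" using split[unfolded split_block_def Let_def] A' by auto
  ultimately show ?thesis using unitary A2 A3 A'block unfolding A'_def W_def by blast
qed

lemma mat_adjoint_four_block_one:
  assumes "(P :: complex mat) \<in> carrier_mat k k"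
  shows "mat_adjoint (four_block_mat (1\<^sub>m 1) (0\<^sub>m 1 k) (0\<^sub>m k 1) P)
       = four_block_mat (1\<^sub>m 1) (0\<^sub>m 1 k) (0\<^sub>m k 1) (mat_adjoint P)"
  using assms by (intro eq_matI) (auto simp: index_mat_four_block)

lemma unitary_mat_four_block_one:
  assumes "unitary_mat k P"
  shows "unitary_mat (Suc k) (four_block_mat (1\<^sub>m 1) (0\<^sub>m 1 k) (0\<^sub>m k 1) P)"
proof -
  have P: "P \<in> carrier_mat k k" "mat_adjoint P \<in> carrier_mat k k"
    using assms unfolding unitary_mat_def by auto
  have "mat_adjoint (four_block_mat (1\<^sub>m 1) (0\<^sub>m 1 k) (0\<^sub>m k 1) P) * four_block_mat (1\<^sub>m 1) (0\<^sub>m 1 k) (0\<^sub>m k 1) P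
      = four_block_mat (1\<^sub>m 1) (0\<^sub>m 1 k) (0\<^sub>m k 1) (mat_adjoint P * P)"
    unfolding mat_adjoint_four_block_one[OF P(1)] using P by (subst mult_four_block_mat) auto
  thus ?thesis using assms P unfolding unitary_mat_def by auto
qed

lemma four_block_unitary_conj:
  assumes P: "unitary_mat k P" and A1: "A1 \<in> carrier_mat 1 1" and A2: "A2 \<in> carrier_mat 1 k"
    and B: "B \<in> carrier_mat k k"
  defines "Q \<equiv> four_block_mat (1\<^sub>m 1) (0\<^sub>m 1 k) (0\<^sub>m k 1) P"
  shows "four_block_mat A1 A2 (0\<^sub>m k 1) (P * B * mat_adjoint P)
       = Q * four_block_mat A1 (A2 * P) (0\<^sub>m k 1) B * mat_adjoint Q"
proof -
  have Pc: "P \<in> carrier_mat k k" "mat_adjoint P \<in> carrier_mat k k"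
    using P unfolding unitary_mat_def by auto
  have "similar_mat_wit (P * B * mat_adjoint P) B P (mat_adjoint P)"
    using Pc B unitary_mat_right_inverse[OF P] P
    by (intro similar_mat_witI[of _ _ k]) (auto simp: unitary_mat_def)
  hence "similar_mat_wit (four_block_mat A1 A2 (0\<^sub>m k 1) (P * B * mat_adjoint P))
      (four_block_mat A1 (A2 * P) (0\<^sub>m k 1) B) Q (mat_adjoint Q)"
    unfolding Q_def mat_adjoint_four_block_one[OF Pc(1)]
    by (rule similar_mat_wit_four_block[OF similar_mat_wit_refl[OF A1]])
      (use Pc A1 A2 B unitary_mat_right_inverse[OF P] in auto)
  thus ?thesis unfolding similar_mat_wit_def Let_def by auto
qed

lemma char_poly_deflated_block:
  assumes W: "unitary_mat n W" and A: "A \<in> carrier_mat n n"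
    and A2: "A2 \<in> carrier_mat 1 (n - 1)" and A3: "A3 \<in> carrier_mat (n - 1) (n - 1)"
    and WAW: "mat_adjoint W * A * W = four_block_mat (mat 1 1 (\<lambda>_. e)) A2 (0\<^sub>m (n - 1) 1) A3"
    and cp: "char_poly A = [: -e, 1 :] * p"
  shows "char_poly A3 = p"
proof -
  have "similar_mat (mat_adjoint W * A * W) A"
    using similar_mat_unitary_conj[OF unitary_mat_adjoint[OF W] A] by simp
  hence "char_poly A = char_poly (mat_adjoint W * A * W)"
    by (simp add: char_poly_similar)
  also have "\<dots> = char_poly (mat 1 1 (\<lambda>_. e)) * char_poly A3"
    unfolding WAW by (rule char_poly_four_block_zeros_col[OF _ A2 A3]) simp
  also have "char_poly (mat 1 1 (\<lambda>_. e)) = [: -e, 1 :]"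
    by (simp add: char_poly_defs det_def sign_def)
  finally have "[: -e, 1 :] * char_poly A3 = [: -e, 1 :] * p"
    unfolding cp by simp
  thus ?thesis by (metis mult_cancel_left pCons_eq_0_iff zero_neq_one)
qed

theorem unitary_schur_decomposition:
  assumes "(A :: complex mat) \<in> carrier_mat n n"
    and "char_poly A = (\<Prod>e \<leftarrow> es. [:- e, 1:])"
  shows "\<exists>P B. unitary_mat n P \<and> B \<in> carrier_mat n n \<and> upper_triangular B \<and> A = P * B * mat_adjoint P"
  using assms
proof (induct es arbitrary: n A)
  case Nil
  with degree_monic_char_poly[of A n] have "n = 0" by auto
  thus ?case using Nil by (intro exI[of _ "1\<^sub>m n"] exI[of _ A]) (auto simp: unitary_mat_def upper_triangular_def)
next
  case (Cons e es n A)
  have A: "A \<in> carrier_mat n n" by fact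
  have mon: "monic (\<Prod>e\<leftarrow> es. [:- e, 1:])" by (rule monic_prod_list) auto
  have cp: "char_poly A = [: -e, 1 :] * (\<Prod>e \<leftarrow> es. [:- e, 1:])" using Cons(3) by simp
  have "degree (char_poly A) = Suc (degree (\<Prod>e\<leftarrow> es. [:- e, 1:]))"
    unfolding cp by (subst degree_mult_eq) (use mon in auto)
  with degree_monic_char_poly[OF A] have n: "n \<noteq> 0" by auto
  have "eigenvalue A e" unfolding eigenvalue_root_char_poly[OF A] Cons(3) by simp
  from unitary_eigenvector_deflation[OF A n this] obtain W A2 A3 where
    W: "unitary_mat n W" and A2: "A2 \<in> carrier_mat 1 (n - 1)" and A3: "A3 \<in> carrier_mat (n - 1) (n - 1)"
    and WAW: "mat_adjoint W * A * W = four_block_mat (mat 1 1 (\<lambda>_. e)) A2 (0\<^sub>m (n - 1) 1) A3"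
    by blast
  let ?A1 = "mat 1 1 (\<lambda>_. e) :: complex mat"
  have "char_poly A3 = (\<Prod>e \<leftarrow> es. [:- e, 1:])"
    by (rule char_poly_deflated_block[OF W A A2 A3 WAW cp])
  from Cons(1)[OF A3 this] obtain P' B where P': "unitary_mat (n - 1) P'"
    and B: "B \<in> carrier_mat (n - 1) (n - 1)" "upper_triangular B" and A3PB: "A3 = P' * B * mat_adjoint P'"
    by blast
  let ?P = "four_block_mat (1\<^sub>m 1) (0\<^sub>m 1 (n - 1)) (0\<^sub>m (n - 1) 1) P'"
  let ?C = "four_block_mat ?A1 (A2 * P') (0\<^sub>m (n - 1) 1) B"
  have AC: "mat_adjoint W * A * W = ?P * ?C * mat_adjoint ?P"
    unfolding WAW A3PB by (rule four_block_unitary_conj[OF P' _ A2 B(1)]) simp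
  have P'c: "P' \<in> carrier_mat (n - 1) (n - 1)" using P' unfolding unitary_mat_def by auto
  have "unitary_mat n ?P" using unitary_mat_four_block_one[OF P'] n by simp
  moreover have "?C \<in> carrier_mat n n" using B A2 P'c n by auto
  ultimately have "unitary_mat n (W * ?P)" "A = (W * ?P) * ?C * mat_adjoint (W * ?P)"
    using unitary_mat_mult[OF W] unitary_conj_trans[OF W _ A _ AC] by auto
  moreover have "upper_triangular ?C"
    using B by (intro upper_triangular_four_block) (auto simp: A2 P'c)
  ultimately show ?case using B(1) n by (intro exI[of _ "W * ?P"] exI[of _ ?C]) auto
qed

lemma hermitian_unitary_diagonalization:
  assumes A: "(A :: complex mat) \<in> carrier_mat n n" and herm: "mat_adjoint A = A"
  shows "\<exists>P B. unitary_mat n P \<and> B \<in> carrier_mat n n \<and> diagonal_mat B \<and> A = P * B * mat_adjoint P"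
proof -
  obtain es where "char_poly A = (\<Prod>a\<leftarrow>es. [:- a, 1:])" using char_poly_factorized[OF A] by auto
  from unitary_schur_decomposition[OF A this] obtain P B where P: "unitary_mat n P"
    and B: "B \<in> carrier_mat n n" "upper_triangular B" and AB: "A = P * B * mat_adjoint P"
    by blast
  have Pc: "P \<in> carrier_mat n n" "mat_adjoint P \<in> carrier_mat n n"
    using P unfolding unitary_mat_def by auto
  have BA: "B = mat_adjoint P * A * P" using unitary_conj_cancel[OF P B(1)] AB by simp
  have "mat_adjoint B = B"
    unfolding BA using Pc A herm
    by (simp add: mat_adjoint_mult[of _ n n _ n] assoc_mult_mat[of _ n n _ n _ n])
  hence "B $$ (i,j) = cnj (B $$ (j,i))" if "i < n" "j < n" for i j
    using index_mat_adjoint[of i B j] that B(1) by simp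
  hence "diagonal_mat B"
    using B unfolding diagonal_mat_def upper_triangular_def
    by (metis carrier_matD complex_cnj_zero linorder_neqE_nat)
  thus ?thesis using P B AB by blast
qed

section \<open>Singular values and the Frobenius norm\<close>

lemma gram_unitary_diagonalization:
  assumes "(X :: complex mat) \<in> carrier_mat M N"
  shows "\<exists>R B. unitary_mat N R \<and> B \<in> carrier_mat N N \<and> diagonal_mat B \<and>
           mat_adjoint X * X = R * B * mat_adjoint R"
  using assms by (intro hermitian_unitary_diagonalization)
    (auto simp: mat_adjoint_mult[of _ N M _ N])

definition trace :: "complex mat \<Rightarrow> complex" where
  "trace A = (\<Sum>k<dim_row A. A $$ (k,k))"

lemma trace_mult_comm:
  assumes "A \<in> carrier_mat m n" "B \<in> carrier_mat n m"
  shows "trace (A * B) = trace (B * A)"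
proof -
  have "trace (A * B) = (\<Sum>i<m. \<Sum>k<n. A $$ (i,k) * B $$ (k,i))"
    unfolding trace_def using assms by (auto simp: index_mult_mat_sum)
  also have "\<dots> = (\<Sum>k<n. \<Sum>i<m. B $$ (k,i) * A $$ (i,k))"
    by (subst sum.swap) (simp add: mult.commute)
  also have "\<dots> = trace (B * A)"
    unfolding trace_def using assms by (auto simp: index_mult_mat_sum)
  finally show ?thesis .
qed

lemma cnj_mult_self: "cnj z * z = complex_of_real ((cmod z)\<^sup>2)"
  by (metis complex_norm_square mult.commute)

lemma mult_cnj_self: "z * cnj z = (complex_of_real (cmod z))\<^sup>2"
  by (metis complex_norm_square of_real_power)

lemma index_gram_diag:
  assumes "Z \<in> carrier_mat M N" "k < N"
  shows "(mat_adjoint Z * Z) $$ (k,k) = complex_of_real (\<Sum>i<M. (cmod (Z $$ (i,k)))\<^sup>2)"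
  using assms by (simp add: index_mult_mat_sum cnj_mult_self)

lemma frob_sq_eq_trace_gram:
  assumes "X \<in> carrier_mat M N"
  shows "complex_of_real (frob_sq X) = trace (mat_adjoint X * X)"
  using assms unfolding frob_sq_def trace_def by (simp add: index_gram_diag, subst sum.swap, simp)

lemma gram_mult_diagonalizing_unitary:
  assumes X: "X \<in> carrier_mat M N" and R: "unitary_mat N R" and B: "B \<in> carrier_mat N N"
    and XX: "mat_adjoint X * X = R * B * mat_adjoint R"
  shows "mat_adjoint (X * R) * (X * R) = B"
proof -
  have Rc: "R \<in> carrier_mat N N" "mat_adjoint R \<in> carrier_mat N N"
    using R unfolding unitary_mat_def by auto
  have "mat_adjoint (X * R) * (X * R) = mat_adjoint R * (mat_adjoint X * X) * R"
    using X Rc by (simp add: mat_adjoint_mult[OF X] assoc_mult_mat[of _ N M _ M _ N]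
        assoc_mult_mat[of _ N N _ M _ N] assoc_mult_mat[of _ N M _ N _ N] assoc_mult_mat[of _ N N _ N _ N])
  thus ?thesis unfolding XX using unitary_conj_cancel[OF R B] by simp
qed

lemma proots_prod_linear: "proots (\<Prod>a\<leftarrow>xs. [:- a, 1:]) = mset (xs :: complex list)"
proof (induct xs)
  case (Cons a xs)
  have "monic (\<Prod>a\<leftarrow>xs. [:- a, 1:])" by (rule monic_prod_list) auto
  hence "(\<Prod>a\<leftarrow>xs. [:- a, 1:]) \<noteq> 0" by auto
  thus ?case using Cons proots_mult[of "[:- a, 1:]"] proots_linear_factor[of "-a"] by simp
qed simp

lemma singular_values_gram_diagonal:
  assumes X: "X \<in> carrier_mat M N" and NM: "N \<le> M" and R: "unitary_mat N R"
    and B: "B \<in> carrier_mat N N" "diagonal_mat B"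
    and XX: "mat_adjoint X * X = R * B * mat_adjoint R"
  shows "singular_values X = mset (map (\<lambda>k. sqrt (Re (B $$ (k,k)))) [0..<N])"
    and "frob_sq X = (\<Sum>k<N. Re (B $$ (k,k)))"
    and "k < N \<Longrightarrow> Re (B $$ (k,k)) \<ge> 0"
proof -
  have Rc: "R \<in> carrier_mat N N" "mat_adjoint R \<in> carrier_mat N N"
    using R unfolding unitary_mat_def by auto
  have "similar_mat (mat_adjoint X * X) B"
    unfolding XX by (rule similar_mat_unitary_conj[OF R B(1)])
  hence "char_poly (mat_adjoint X * X) = (\<Prod>a\<leftarrow>diag_mat B. [:- a, 1:])"
    using char_poly_upper_triangular[OF B(1)] B unfolding upper_triangular_def diagonal_mat_def
    by (simp add: char_poly_similar)
  moreover have "diag_mat B = map (\<lambda>k. B $$ (k,k)) [0..<N]"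
    unfolding diag_mat_def using B by simp
  ultimately have "proots (char_poly (mat_adjoint X * X)) = mset (map (\<lambda>k. B $$ (k,k)) [0..<N])"
    by (simp only: proots_prod_linear)
  thus "singular_values X = mset (map (\<lambda>k. sqrt (Re (B $$ (k,k)))) [0..<N])"
    unfolding singular_values_def using X NM
    by (simp add: image_mset.compositionality o_def)
  have "complex_of_real (frob_sq X) = trace (R * B * mat_adjoint R)"
    unfolding frob_sq_eq_trace_gram[OF X] XX ..
  also have "\<dots> = trace (mat_adjoint R * (R * B))"
    using Rc B by (intro trace_mult_comm) auto
  also have "mat_adjoint R * (R * B) = B"
    using Rc B R by (simp add: assoc_mult_mat[symmetric, of _ N N _ N _ N] unitary_mat_def)
  finally show "frob_sq X = (\<Sum>k<N. Re (B $$ (k,k)))"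
    unfolding trace_def using B by (metis Re_complex_of_real Re_sum carrier_matD(1))
  assume "k < N"
  thus "Re (B $$ (k,k)) \<ge> 0"
    using index_gram_diag[of "X * R" M N k] gram_mult_diagonalizing_unitary[OF X R B(1) XX] X Rc
    by (auto intro: sum_nonneg)
qed

lemma singular_values_adjoint:
  assumes "A \<in> carrier_mat M N" "M < N"
  shows "singular_values (mat_adjoint A) = singular_values A"
  using assms unfolding singular_values_def by auto

lemma frob_sq_adjoint: "frob_sq (mat_adjoint A) = frob_sq A"
  unfolding frob_sq_def by (simp, subst sum.swap, simp)

lemma sum_mset_map_upt: "(\<Sum>s\<in>#mset (map f [0..<N]). h s) = (\<Sum>k<N. h (f k))"
  by (simp add: sum_unfold_sum_mset image_mset.compositionality o_def atLeast0LessThan)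

lemma singular_values_nonneg_and_frob_sq_tall:
  assumes X: "X \<in> carrier_mat M N" and NM: "N \<le> M"
  shows "(\<forall>s \<in># singular_values X. s \<ge> 0) \<and> frob_sq X = (\<Sum>s\<in>#singular_values X. s\<^sup>2)"
proof -
  obtain R B where R: "unitary_mat N R" and B: "B \<in> carrier_mat N N" "diagonal_mat B"
    and XX: "mat_adjoint X * X = R * B * mat_adjoint R"
    using gram_unitary_diagonalization[OF X] by blast
  note sv = singular_values_gram_diagonal[OF X NM R B XX]
  have "(\<Sum>s\<in>#singular_values X. s\<^sup>2) = (\<Sum>k<N. Re (B $$ (k,k)))"
    unfolding sv(1) sum_mset_map_upt using sv(3) by (intro sum.cong) auto
  moreover have "\<forall>s \<in># singular_values X. s \<ge> 0"
    unfolding sv(1) using sv(3) by auto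
  ultimately show ?thesis unfolding sv(2) by simp
qed

lemma singular_values_nonneg_and_frob_sq:
  fixes X :: "complex mat"
  shows "\<forall>s \<in># singular_values X. s \<ge> 0" and "frob_sq X = (\<Sum>s\<in>#singular_values X. s\<^sup>2)"
proof -
  have "(\<forall>s \<in># singular_values X. s \<ge> 0) \<and> frob_sq X = (\<Sum>s\<in>#singular_values X. s\<^sup>2)"
  proof (cases "dim_col X \<le> dim_row X")
    case True
    thus ?thesis by (intro singular_values_nonneg_and_frob_sq_tall[of X "dim_row X" "dim_col X"]) auto
  next
    case False
    have X: "X \<in> carrier_mat (dim_row X) (dim_col X)" by auto
    have "mat_adjoint X \<in> carrier_mat (dim_col X) (dim_row X)" by auto
    from singular_values_nonneg_and_frob_sq_tall[OF this] False
    have "(\<forall>s \<in># singular_values (mat_adjoint X). s \<ge> 0) \<and>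
      frob_sq (mat_adjoint X) = (\<Sum>s\<in>#singular_values (mat_adjoint X). s\<^sup>2)" by simp
    moreover have "singular_values (mat_adjoint X) = singular_values X"
      using singular_values_adjoint[OF X] False by simp
    ultimately show ?thesis unfolding frob_sq_adjoint by simp
  qed
  thus "\<forall>s \<in># singular_values X. s \<ge> 0" "frob_sq X = (\<Sum>s\<in>#singular_values X. s\<^sup>2)"
    by auto
qed

section \<open>The scalar problem\<close>

text \<open>The contribution of a singular value \<open>s\<close> to the objective (see \<open>sv_cost_eq\<close>), written in a form
  that is visibly nonnegative, nondecreasing and convex on \<open>[0, \<infinity>)\<close>.\<close>

definition sv_cost :: "real \<Rightarrow> real \<Rightarrow> real \<Rightarrow> real" where
  "sv_cost s0 \<alpha> x = 2 * s0 * x + (max (x - s0) 0)\<^sup>2 + \<alpha> / 2 * x\<^sup>2"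

lemma sv_cost_eq:
  assumes "s \<ge> 0"
  shows "s0\<^sup>2 - (max (s0 - s) 0)\<^sup>2 + (1 + \<alpha>/2) * s\<^sup>2 = sv_cost s0 \<alpha> s"
  unfolding sv_cost_def using assms
  by (cases "s < s0") (simp_all add: max_def power2_diff power2_eq_square algebra_simps)

lemma sv_cost_nonneg: "s0 > 0 \<Longrightarrow> \<alpha> \<ge> 0 \<Longrightarrow> x \<ge> 0 \<Longrightarrow> sv_cost s0 \<alpha> x \<ge> 0"
  unfolding sv_cost_def by auto

lemma sv_cost_mono:
  assumes "s0 > 0" "\<alpha> \<ge> 0" "0 \<le> x" "x \<le> y"
  shows "sv_cost s0 \<alpha> x \<le> sv_cost s0 \<alpha> y"
proof -
  have "(max (x - s0) 0)\<^sup>2 \<le> (max (y - s0) 0)\<^sup>2" using assms by (intro power_mono) auto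
  moreover have "\<alpha> / 2 * x\<^sup>2 \<le> \<alpha> / 2 * y\<^sup>2" using assms by (intro mult_left_mono power_mono) auto
  ultimately show ?thesis unfolding sv_cost_def using assms by (smt (verit) mult_left_mono)
qed

lemma weighted_sum_sq_le:
  fixes w t :: "nat \<Rightarrow> real"
  assumes "\<And>k. k \<in> S \<Longrightarrow> w k \<ge> 0"
  shows "(\<Sum>k\<in>S. w k * t k)\<^sup>2 \<le> (\<Sum>k\<in>S. w k) * (\<Sum>k\<in>S. w k * (t k)\<^sup>2)"
proof -
  have e1: "(\<Sum>k\<in>S. \<Sum>l\<in>S. w k * w l * (t k)\<^sup>2) = (\<Sum>k\<in>S. w k) * (\<Sum>k\<in>S. w k * (t k)\<^sup>2)"
    by (subst sum.swap) (simp add: sum_product algebra_simps)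
  have e2: "(\<Sum>k\<in>S. \<Sum>l\<in>S. w k * w l * (t l)\<^sup>2) = (\<Sum>k\<in>S. w k) * (\<Sum>k\<in>S. w k * (t k)\<^sup>2)"
    by (simp add: sum_product algebra_simps)
  have e3: "(\<Sum>k\<in>S. \<Sum>l\<in>S. w k * w l * (t k * t l)) = (\<Sum>k\<in>S. w k * t k)\<^sup>2"
    by (simp add: sum_product algebra_simps power2_eq_square)
  have "0 \<le> (\<Sum>k\<in>S. \<Sum>l\<in>S. w k * w l * (t k - t l)\<^sup>2)"
    using assms by (intro sum_nonneg) auto
  also have "\<dots> = (\<Sum>k\<in>S. \<Sum>l\<in>S. w k * w l * (t k)\<^sup>2) + (\<Sum>k\<in>S. \<Sum>l\<in>S. w k * w l * (t l)\<^sup>2)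
      - 2 * (\<Sum>k\<in>S. \<Sum>l\<in>S. w k * w l * (t k * t l))"
    by (simp add: power2_diff algebra_simps sum.distrib sum_subtractf sum_distrib_left)
  finally show ?thesis unfolding e1 e2 e3 by simp
qed

lemma weighted_sum_sq_le_substochastic:
  fixes w t :: "nat \<Rightarrow> real"
  assumes w: "\<And>k. k \<in> S \<Longrightarrow> w k \<ge> 0" and "(\<Sum>k\<in>S. w k) \<le> 1"
  shows "(\<Sum>k\<in>S. w k * t k)\<^sup>2 \<le> (\<Sum>k\<in>S. w k * (t k)\<^sup>2)"
proof -
  have "(\<Sum>k\<in>S. w k * (t k)\<^sup>2) \<ge> 0" using w by (intro sum_nonneg) auto
  hence "(\<Sum>k\<in>S. w k) * (\<Sum>k\<in>S. w k * (t k)\<^sup>2) \<le> (\<Sum>k\<in>S. w k * (t k)\<^sup>2)"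
    using assms by (simp add: mult_left_le_one_le sum_nonneg)
  with weighted_sum_sq_le[of S w t, OF w] show ?thesis by linarith
qed

lemma sv_cost_weighted_sum_le:
  fixes w s :: "nat \<Rightarrow> real"
  assumes s0: "s0 > 0" and \<alpha>: "\<alpha> \<ge> 0"
    and w: "\<And>k. k \<in> S \<Longrightarrow> w k \<ge> 0" and sw: "(\<Sum>k\<in>S. w k) \<le> 1"
  shows "sv_cost s0 \<alpha> (\<Sum>k\<in>S. w k * s k) \<le> (\<Sum>k\<in>S. w k * sv_cost s0 \<alpha> (s k))"
proof -
  let ?t = "\<lambda>k. max (s k - s0) 0"
  have "(\<Sum>k\<in>S. w k * s k) - s0 \<le> (\<Sum>k\<in>S. w k * s k) - s0 * (\<Sum>k\<in>S. w k)"
    using sw s0 by (simp add: mult_left_le_one_le)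
  also have "\<dots> = (\<Sum>k\<in>S. w k * (s k - s0))"
    by (simp add: sum_distrib_left algebra_simps sum_subtractf)
  also have "\<dots> \<le> (\<Sum>k\<in>S. w k * ?t k)" using w by (intro sum_mono mult_left_mono) auto
  finally have "(max ((\<Sum>k\<in>S. w k * s k) - s0) 0)\<^sup>2 \<le> (\<Sum>k\<in>S. w k * ?t k)\<^sup>2"
    using w by (intro power_mono) (auto intro: sum_nonneg)
  also have "\<dots> \<le> (\<Sum>k\<in>S. w k * (?t k)\<^sup>2)" by (rule weighted_sum_sq_le_substochastic[OF w sw])
  finally have "(max ((\<Sum>k\<in>S. w k * s k) - s0) 0)\<^sup>2 \<le> (\<Sum>k\<in>S. w k * (?t k)\<^sup>2)" .
  moreover have "\<alpha> / 2 * (\<Sum>k\<in>S. w k * s k)\<^sup>2 \<le> \<alpha> / 2 * (\<Sum>k\<in>S. w k * (s k)\<^sup>2)"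
    using weighted_sum_sq_le_substochastic[OF w sw, of s] \<alpha> by (intro mult_left_mono) auto
  ultimately have "sv_cost s0 \<alpha> (\<Sum>k\<in>S. w k * s k)
      \<le> 2 * s0 * (\<Sum>k\<in>S. w k * s k) + (\<Sum>k\<in>S. w k * (?t k)\<^sup>2) + \<alpha> / 2 * (\<Sum>k\<in>S. w k * (s k)\<^sup>2)"
    unfolding sv_cost_def by linarith
  also have "\<dots> = (\<Sum>k\<in>S. w k * sv_cost s0 \<alpha> (s k))"
    unfolding sv_cost_def by (simp add: sum_distrib_left sum.distrib algebra_simps)
  finally show ?thesis .
qed

lemma f_alpha_nonneg: "s0 > 0 \<Longrightarrow> \<alpha> \<ge> 0 \<Longrightarrow> f_alpha s0 \<alpha> x \<ge> 0"
  unfolding f_alpha_def by (auto simp: divide_simps)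

lemma f_alpha_minimises_below:
  assumes s0: "s0 > 0" and \<alpha>: "\<alpha> \<ge> 0" and x: "x \<ge> 0" and \<phi>: "\<phi> < (1 + \<alpha>/2) * s0"
  shows "sv_cost s0 \<alpha> (f_alpha s0 \<alpha> \<phi>) - 2 * \<phi> * f_alpha s0 \<alpha> \<phi> \<le> sv_cost s0 \<alpha> x - 2 * \<phi> * x"
proof -
  have lower: "sv_cost s0 \<alpha> x \<ge> 2 * s0 * x + \<alpha> / 2 * x\<^sup>2" unfolding sv_cost_def by auto
  show ?thesis
  proof (cases "\<phi> < s0")
    case True
    hence f: "f_alpha s0 \<alpha> \<phi> = 0" unfolding f_alpha_def by auto
    have "sv_cost s0 \<alpha> 0 = 0" using s0 by (simp add: sv_cost_def)
    moreover have "\<phi> * x \<le> s0 * x" using True x by (intro mult_right_mono) auto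
    moreover have "0 \<le> \<alpha> / 2 * x\<^sup>2" using \<alpha> by simp
    ultimately show ?thesis unfolding f using lower by linarith
  next
    case False
    hence \<alpha>0: "\<alpha> > 0" using \<phi> s0 \<alpha> by (cases "\<alpha> = 0") auto
    define c where "c = 2 / \<alpha> * (\<phi> - s0)"
    have f: "f_alpha s0 \<alpha> \<phi> = c" unfolding f_alpha_def c_def using False \<phi> by auto
    have "c \<ge> 0" "c < s0" unfolding c_def using False \<phi> \<alpha>0 by (auto simp: field_simps)
    hence "sv_cost s0 \<alpha> c = 2 * s0 * c + \<alpha> / 2 * c\<^sup>2" unfolding sv_cost_def by auto
    moreover have "(2 * s0 * x + \<alpha> / 2 * x\<^sup>2 - 2 * \<phi> * x) - (2 * s0 * c + \<alpha> / 2 * c\<^sup>2 - 2 * \<phi> * c)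
        = \<alpha> / 2 * (x - c)\<^sup>2"
      using \<alpha>0 unfolding c_def by (simp add: power2_eq_square field_simps)
    moreover have "\<alpha> / 2 * (x - c)\<^sup>2 \<ge> 0" using \<alpha> by simp
    ultimately show ?thesis unfolding f using lower by linarith
  qed
qed

lemma f_alpha_minimises_above:
  assumes s0: "s0 > 0" and \<alpha>: "\<alpha> \<ge> 0" and x: "x \<ge> 0" and \<phi>: "(1 + \<alpha>/2) * s0 \<le> \<phi>"
  shows "sv_cost s0 \<alpha> (f_alpha s0 \<alpha> \<phi>) - 2 * \<phi> * f_alpha s0 \<alpha> \<phi> \<le> sv_cost s0 \<alpha> x - 2 * \<phi> * x"
proof -
  define \<beta> where "\<beta> = 1 + \<alpha>/2"
  define c where "c = \<phi> / \<beta>"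
  have \<beta>: "\<beta> \<ge> 1" unfolding \<beta>_def using \<alpha> by auto
  have "s0 \<le> \<beta> * s0" using s0 \<beta> by simp
  hence f: "f_alpha s0 \<alpha> \<phi> = c" unfolding f_alpha_def c_def \<beta>_def using \<phi> by (auto simp: \<beta>_def)
  have cs: "c \<ge> s0" unfolding c_def using \<phi> \<beta> by (auto simp: field_simps \<beta>_def)
  have \<phi>c: "\<phi> = \<beta> * c" unfolding c_def using \<beta> by auto
  have Gc: "sv_cost s0 \<alpha> c - 2 * \<phi> * c = s0\<^sup>2 - \<beta> * c\<^sup>2"
    unfolding sv_cost_def using cs \<phi>c by (simp add: \<beta>_def power2_eq_square algebra_simps)
  show ?thesis
  proof (cases "x \<ge> s0")
    case True
    have "sv_cost s0 \<alpha> x - 2 * \<phi> * x - (s0\<^sup>2 - \<beta> * c\<^sup>2) = \<beta> * (x - c)\<^sup>2"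
      unfolding sv_cost_def using True \<phi>c by (simp add: \<beta>_def power2_eq_square algebra_simps)
    moreover have "\<beta> * (x - c)\<^sup>2 \<ge> 0" using \<beta> by simp
    ultimately show ?thesis unfolding f using Gc by linarith
  next
    case False
    have "\<alpha> * (x + s0) \<le> \<alpha> * (2 * s0)" using False \<alpha> by (intro mult_left_mono) auto
    moreover have "2 * (\<phi> - s0) - \<alpha> * s0 \<ge> 0" using \<phi> by (auto simp: algebra_simps)
    ultimately have "(s0 - x) * (2 * (\<phi> - s0) - \<alpha> / 2 * (x + s0)) \<ge> 0"
      using False by (intro mult_nonneg_nonneg) auto
    moreover have "sv_cost s0 \<alpha> x - 2 * \<phi> * x - (s0\<^sup>2 - \<beta> * c\<^sup>2)
        = (s0 - x) * (2 * (\<phi> - s0) - \<alpha> / 2 * (x + s0)) + \<beta> * (s0 - c)\<^sup>2"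
      unfolding sv_cost_def using False \<phi>c by (simp add: \<beta>_def power2_eq_square field_simps)
    moreover have "\<beta> * (s0 - c)\<^sup>2 \<ge> 0" using \<beta> by simp
    ultimately show ?thesis unfolding f using Gc by linarith
  qed
qed

lemma f_alpha_minimises:
  assumes "s0 > 0" "\<alpha> \<ge> 0" "x \<ge> 0"
  shows "sv_cost s0 \<alpha> (f_alpha s0 \<alpha> \<phi>) - 2 * \<phi> * f_alpha s0 \<alpha> \<phi> \<le> sv_cost s0 \<alpha> x - 2 * \<phi> * x"
  using f_alpha_minimises_below[OF assms] f_alpha_minimises_above[OF assms] by (cases "\<phi> < (1 + \<alpha>/2) * s0") auto

section \<open>The diagonal is majorised by the singular values\<close>

lemma orthogonal_columns_pythagoras:
  fixes z :: "nat \<Rightarrow> nat \<Rightarrow> complex" and b :: "nat \<Rightarrow> real" and a :: "nat \<Rightarrow> complex"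
  assumes orth: "\<And>k l. k < N \<Longrightarrow> l < N \<Longrightarrow>
      (\<Sum>i<M. cnj (z i k) * z i l) = (if k = l then complex_of_real (b k) else 0)"
  shows "(\<Sum>i<M. (cmod (\<Sum>k<N. a k * cnj (z i k)))\<^sup>2) = (\<Sum>k<N. (cmod (a k))\<^sup>2 * b k)"
proof -
  have "complex_of_real (\<Sum>i<M. (cmod (\<Sum>k<N. a k * cnj (z i k)))\<^sup>2)
      = (\<Sum>i<M. (\<Sum>k<N. a k * cnj (z i k)) * cnj (\<Sum>l<N. a l * cnj (z i l)))"
    by (simp only: of_real_sum of_real_power mult_cnj_self)
  also have "\<dots> = (\<Sum>i<M. \<Sum>k<N. \<Sum>l<N. (a k * cnj (a l)) * (cnj (z i k) * z i l))"
    by (simp add: sum_product cnj_sum algebra_simps)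
  also have "\<dots> = (\<Sum>k<N. \<Sum>l<N. (a k * cnj (a l)) * (\<Sum>i<M. cnj (z i k) * z i l))"
    by (subst sum.swap, simp add: sum_distrib_left, rule sum.cong[OF refl], subst sum.swap, simp)
  also have "\<dots> = (\<Sum>k<N. (a k * cnj (a k)) * complex_of_real (b k))"
    by (rule sum.cong[OF refl]) (simp add: orth if_distrib sum.delta cong: if_cong)
  also have "\<dots> = complex_of_real (\<Sum>k<N. (cmod (a k))\<^sup>2 * b k)"
    by (simp add: mult_cnj_self)
  finally show ?thesis by (simp only: of_real_eq_iff)
qed

text \<open>Bessel's inequality for the unit vector \<open>e\<^sub>j\<close> and the normalised nonzero columns of \<open>z\<close>.\<close>

lemma orthogonal_columns_row_bound:
  fixes z :: "nat \<Rightarrow> nat \<Rightarrow> complex" and b :: "nat \<Rightarrow> real"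
  assumes orth: "\<And>k l. k < N \<Longrightarrow> l < N \<Longrightarrow>
      (\<Sum>i<M. cnj (z i k) * z i l) = (if k = l then complex_of_real (b k) else 0)"
    and j: "j < M"
  shows "(\<Sum>k<N. if b k > 0 then (cmod (z j k))\<^sup>2 / b k else 0) \<le> 1"
proof -
  define c where "c k = (if b k > 0 then 1 / b k else 0)" for k
  define t where "t = (\<Sum>k<N. c k * (cmod (z j k))\<^sup>2)"
  define p where "p i = (\<Sum>k<N. complex_of_real (c k) * z j k * cnj (z i k))" for i
  have t0: "t \<ge> 0" unfolding t_def c_def by (intro sum_nonneg) auto
  have "(\<Sum>i<M. (cmod (p i))\<^sup>2) = (\<Sum>k<N. (cmod (complex_of_real (c k) * z j k))\<^sup>2 * b k)"
    unfolding p_def by (rule orthogonal_columns_pythagoras[OF orth])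
  also have "\<dots> = t"
    unfolding t_def
  proof (rule sum.cong[OF refl])
    fix k
    show "(cmod (complex_of_real (c k) * z j k))\<^sup>2 * b k = c k * (cmod (z j k))\<^sup>2"
      unfolding c_def by (cases "b k > 0") (simp_all add: norm_divide power2_eq_square field_simps)
  qed
  finally have norm_p: "(\<Sum>i<M. (cmod (p i))\<^sup>2) = t" .
  have "p j = complex_of_real t"
    unfolding p_def t_def by (simp add: mult.assoc mult_cnj_self)
  hence "t\<^sup>2 = (cmod (p j))\<^sup>2" using t0 by simp
  also have "\<dots> \<le> t"
    unfolding norm_p[symmetric] by (rule member_le_sum) (use j in auto)
  finally have "t \<le> 1" using t0 by (cases "t \<le> 1") (auto simp: power2_eq_square)
  moreover have "(\<Sum>k<N. if b k > 0 then (cmod (z j k))\<^sup>2 / b k else 0) = t"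
    unfolding t_def c_def by (rule sum.cong) auto
  ultimately show ?thesis by simp
qed

lemma normalized_column_weights_substochastic:
  assumes Z: "Z \<in> carrier_mat M N" and diag: "diagonal_mat (mat_adjoint Z * Z)"
  defines "b k \<equiv> (\<Sum>i<M. (cmod (Z $$ (i,k)))\<^sup>2)"
  defines "p j k \<equiv> (if b k > 0 then (cmod (Z $$ (j,k)))\<^sup>2 / b k else 0)"
  shows "j < M \<Longrightarrow> (\<Sum>k<N. p j k) \<le> 1" and "(\<Sum>j<M. p j k) \<le> 1"
proof -
  have "(\<Sum>i<M. cnj (Z $$ (i,k)) * Z $$ (i,l)) = (if k = l then complex_of_real (b k) else 0)"
    if "k < N" "l < N" for k l
    using diag index_gram_diag[OF Z that(1)] Z that unfolding diagonal_mat_def b_def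
    by (auto simp: index_mult_mat_sum)
  from orthogonal_columns_row_bound[where z = "\<lambda>i k. Z $$ (i,k)" and b = b, OF this]
  show "j < M \<Longrightarrow> (\<Sum>k<N. p j k) \<le> 1" unfolding p_def by auto
  show "(\<Sum>j<M. p j k) \<le> 1"
  proof (cases "b k > 0")
    case True
    thus ?thesis unfolding p_def b_def by (simp add: sum_divide_distrib[symmetric])
  qed (simp add: p_def)
qed

lemma unitary_mat_row_sum_sq:
  assumes "unitary_mat n P" "j < n"
  shows "(\<Sum>k<n. (cmod (P $$ (j,k)))\<^sup>2) = 1" and "(\<Sum>k<n. (cmod (P $$ (k,j)))\<^sup>2) = 1"
proof -
  have P: "P \<in> carrier_mat n n" using assms unfolding unitary_mat_def by auto
  have "complex_of_real (\<Sum>k<n. (cmod (P $$ (j,k)))\<^sup>2) = (P * mat_adjoint P) $$ (j,j)"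
    using P assms(2) by (simp add: index_mult_mat_sum mult_cnj_self)
  thus "(\<Sum>k<n. (cmod (P $$ (j,k)))\<^sup>2) = 1"
    using unitary_mat_right_inverse[OF assms(1)] assms(2) by (metis index_one_mat(1) of_real_eq_1_iff)
  have "complex_of_real (\<Sum>k<n. (cmod (P $$ (k,j)))\<^sup>2) = (mat_adjoint P * P) $$ (j,j)"
    using index_gram_diag[OF P assms(2)] by simp
  thus "(\<Sum>k<n. (cmod (P $$ (k,j)))\<^sup>2) = 1"
    using assms unfolding unitary_mat_def by (metis index_one_mat(1) of_real_eq_1_iff)
qed

lemma mult_le_mean_sq_mult_sqrt:
  fixes x y b :: real
  assumes "b > 0"
  shows "x * y \<le> (x\<^sup>2 / b + y\<^sup>2) / 2 * sqrt b"
proof -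
  define u where "u = x / sqrt b"
  have "2 * u * y \<le> u\<^sup>2 + y\<^sup>2" by (rule sum_squares_bound)
  hence "sqrt b * (u * y) \<le> sqrt b * ((u\<^sup>2 + y\<^sup>2) / 2)" using assms by (intro mult_left_mono) auto
  moreover have "x * y = sqrt b * (u * y)" unfolding u_def using assms by simp
  moreover have "(x\<^sup>2 / b + y\<^sup>2) / 2 * sqrt b = sqrt b * ((u\<^sup>2 + y\<^sup>2) / 2)"
    unfolding u_def using assms by (simp add: power_divide mult.commute)
  ultimately show ?thesis by linarith
qed

lemma mean_weights_doubly_substochastic:
  assumes Z: "Z \<in> carrier_mat M N" and diag: "diagonal_mat (mat_adjoint Z * Z)"
    and P: "unitary_mat N P" and NM: "N \<le> M"
  defines "b k \<equiv> (\<Sum>i<M. (cmod (Z $$ (i,k)))\<^sup>2)"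
  defines "w j k \<equiv> ((if b k > 0 then (cmod (Z $$ (j,k)))\<^sup>2 / b k else 0) + (cmod (P $$ (j,k)))\<^sup>2) / 2"
  shows "w j k \<ge> 0" and "j < N \<Longrightarrow> (\<Sum>k<N. w j k) \<le> 1" and "k < N \<Longrightarrow> (\<Sum>j<N. w j k) \<le> 1"
    and "j < M \<Longrightarrow> cmod (Z $$ (j,k)) * cmod (P $$ (j,k)) \<le> w j k * sqrt (b k)"
proof -
  define p where "p j k = (if b k > 0 then (cmod (Z $$ (j,k)))\<^sup>2 / b k else 0)" for j k
  note p_sums = normalized_column_weights_substochastic[OF Z diag, folded b_def]
  have p_row: "(\<Sum>k<N. p j k) \<le> 1" if "j < M" for j
    using p_sums(1)[OF that] unfolding p_def by simp
  have p_col: "(\<Sum>j<M. p j k) \<le> 1" for k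
    using p_sums(2)[of k] unfolding p_def by simp
  have w: "w j k = (p j k + (cmod (P $$ (j,k)))\<^sup>2) / 2" for j k unfolding w_def p_def ..
  show "w j k \<ge> 0" unfolding w_def by auto
  show "(\<Sum>k<N. w j k) \<le> 1" if "j < N"
    using p_row[of j] unitary_mat_row_sum_sq(1)[OF P that] that NM
    unfolding w by (simp add: sum.distrib sum_divide_distrib[symmetric])
  show "(\<Sum>j<N. w j k) \<le> 1" if "k < N"
  proof -
    have "(\<Sum>j<N. p j k) \<le> (\<Sum>j<M. p j k)" using NM by (intro sum_mono2) (auto simp: p_def)
    thus ?thesis using p_col[of k] unitary_mat_row_sum_sq(2)[OF P that]
      unfolding w by (simp add: sum.distrib sum_divide_distrib[symmetric])
  qed
  show "cmod (Z $$ (j,k)) * cmod (P $$ (j,k)) \<le> w j k * sqrt (b k)" if "j < M"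
  proof (cases "b k > 0")
    case True
    thus ?thesis using mult_le_mean_sq_mult_sqrt[OF True, of "cmod (Z $$ (j,k))" "cmod (P $$ (j,k))"]
      unfolding w_def by (simp only: if_True)
  next
    case False
    hence bk: "b k = 0" unfolding b_def using sum_nonneg[of "{..<M}" "\<lambda>i. (cmod (Z $$ (i,k)))\<^sup>2"] by auto
    hence "cmod (Z $$ (j,k)) = 0" unfolding b_def using that by (subst (asm) sum_nonneg_eq_0_iff) auto
    thus ?thesis using bk by simp
  qed
qed

text \<open>With \<open>Y P = Z\<close> having orthogonal columns of lengths \<open>\<sigma>\<^sub>k\<close>, \<open>Y\<^sub>j\<^sub>j = \<Sum>\<^sub>k Z\<^sub>j\<^sub>k conj P\<^sub>j\<^sub>k\<close>,
  and AM-GM bounds \<open>|Z\<^sub>j\<^sub>k| |P\<^sub>j\<^sub>k|\<close> by \<open>\<sigma>\<^sub>k\<close> times the mean of two substochastic weights.\<close>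

lemma diag_entry_le_weighted_singular_values:
  assumes Y: "Y \<in> carrier_mat M N" and NM: "N \<le> M" and P: "unitary_mat N P"
    and B: "B \<in> carrier_mat N N" "diagonal_mat B" and YY: "mat_adjoint Y * Y = P * B * mat_adjoint P"
  shows "\<exists>w. (\<forall>j k. w j k \<ge> 0) \<and> (\<forall>j<N. (\<Sum>k<N. w j k) \<le> 1) \<and> (\<forall>k<N. (\<Sum>j<N. w j k) \<le> 1) \<and>
    (\<forall>j<N. cmod (Y $$ (j,j)) \<le> (\<Sum>k<N. w j k * sqrt (Re (B $$ (k,k)))))"
proof -
  define Z where "Z = Y * P"
  have Pc: "P \<in> carrier_mat N N" "mat_adjoint P \<in> carrier_mat N N"
    using P unfolding unitary_mat_def by auto
  have Z: "Z \<in> carrier_mat M N" unfolding Z_def using Y Pc by auto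
  have ZZ: "mat_adjoint Z * Z = B" unfolding Z_def by (rule gram_mult_diagonalizing_unitary[OF Y P B(1) YY])
  define b where "b k = (\<Sum>i<M. (cmod (Z $$ (i,k)))\<^sup>2)" for k
  define w where "w j k = ((if b k > 0 then (cmod (Z $$ (j,k)))\<^sup>2 / b k else 0) + (cmod (P $$ (j,k)))\<^sup>2) / 2"
    for j k
  note w = mean_weights_doubly_substochastic[OF Z, unfolded ZZ, OF B(2) P NM, folded b_def]
  have "cmod (Y $$ (j,j)) \<le> (\<Sum>k<N. w j k * sqrt (Re (B $$ (k,k))))" if j: "j < N" for j
  proof -
    have "Y = Z * mat_adjoint P"
      unfolding Z_def using Y Pc unitary_mat_right_inverse[OF P] by (simp add: assoc_mult_mat[of _ M N _ N _ N])
    hence "Y $$ (j,j) = (\<Sum>k<N. Z $$ (j,k) * cnj (P $$ (j,k)))"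
      using j NM Z Pc by (simp add: index_mult_mat_sum)
    hence "cmod (Y $$ (j,j)) \<le> (\<Sum>k<N. cmod (Z $$ (j,k)) * cmod (P $$ (j,k)))"
      by (simp add: norm_sum[THEN order_trans] norm_mult)
    also have "\<dots> \<le> (\<Sum>k<N. w j k * sqrt (Re (B $$ (k,k))))"
    proof (rule sum_mono)
      fix k assume "k \<in> {..<N}"
      hence "Re (B $$ (k,k)) = b k" using index_gram_diag[OF Z] unfolding ZZ b_def by simp
      thus "cmod (Z $$ (j,k)) * cmod (P $$ (j,k)) \<le> w j k * sqrt (Re (B $$ (k,k)))"
        using w(4)[of j k] j NM by (simp add: w_def)
    qed
    finally show ?thesis .
  qed
  moreover have "\<forall>j k. w j k \<ge> 0" "\<forall>j<N. (\<Sum>k<N. w j k) \<le> 1" "\<forall>k<N. (\<Sum>j<N. w j k) \<le> 1"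
    unfolding w_def using w(1-3) by auto
  ultimately show ?thesis by blast
qed

lemma sv_cost_sum_le_doubly_substochastic:
  fixes N :: nat and w :: "nat \<Rightarrow> nat \<Rightarrow> real"
  assumes s0: "s0 > 0" and \<alpha>: "\<alpha> \<ge> 0" and w0: "\<And>j k. w j k \<ge> 0"
    and rows: "\<And>j. j < N \<Longrightarrow> (\<Sum>k<N. w j k) \<le> 1" and cols: "\<And>k. k < N \<Longrightarrow> (\<Sum>j<N. w j k) \<le> 1"
    and x: "\<And>j. j < N \<Longrightarrow> 0 \<le> x j \<and> x j \<le> (\<Sum>k<N. w j k * s k)" and s: "\<And>k. k < N \<Longrightarrow> s k \<ge> 0"
  shows "(\<Sum>j<N. sv_cost s0 \<alpha> (x j)) \<le> (\<Sum>k<N. sv_cost s0 \<alpha> (s k))"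
proof -
  have "(\<Sum>j<N. sv_cost s0 \<alpha> (x j)) \<le> (\<Sum>j<N. \<Sum>k<N. w j k * sv_cost s0 \<alpha> (s k))"
  proof (rule sum_mono)
    fix j assume "j \<in> {..<N}"
    hence j: "j < N" by simp
    have "sv_cost s0 \<alpha> (x j) \<le> sv_cost s0 \<alpha> (\<Sum>k<N. w j k * s k)"
      using x[OF j] by (intro sv_cost_mono[OF s0 \<alpha>]) auto
    also have "\<dots> \<le> (\<Sum>k<N. w j k * sv_cost s0 \<alpha> (s k))"
      using sv_cost_weighted_sum_le[OF s0 \<alpha>, where w = "w j" and s = s] w0 rows[OF j] by simp
    finally show "sv_cost s0 \<alpha> (x j) \<le> (\<Sum>k<N. w j k * sv_cost s0 \<alpha> (s k))" .
  qed
  also have "\<dots> = (\<Sum>k<N. (\<Sum>j<N. w j k) * sv_cost s0 \<alpha> (s k))"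
    by (subst sum.swap) (simp add: sum_distrib_right)
  also have "\<dots> \<le> (\<Sum>k<N. sv_cost s0 \<alpha> (s k))"
    using cols s sv_cost_nonneg[OF s0 \<alpha>] w0
    by (intro sum_mono) (simp add: mult_left_le_one_le sum_nonneg)
  finally show ?thesis .
qed

lemma sv_cost_diag_le_singular_values:
  assumes Y: "Y \<in> carrier_mat M N" and NM: "N \<le> M" and s0: "s0 > 0" and \<alpha>: "\<alpha> \<ge> 0"
  shows "(\<Sum>j<N. sv_cost s0 \<alpha> (cmod (Y $$ (j,j)))) \<le> (\<Sum>s\<in>#singular_values Y. sv_cost s0 \<alpha> s)"
proof -
  obtain P B where P: "unitary_mat N P" and B: "B \<in> carrier_mat N N" "diagonal_mat B"
    and YY: "mat_adjoint Y * Y = P * B * mat_adjoint P"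
    using gram_unitary_diagonalization[OF Y] by blast
  note sv = singular_values_gram_diagonal[OF Y NM P B YY]
  obtain w where "\<forall>j k. w j k \<ge> 0" "\<forall>j<N. (\<Sum>k<N. w j k) \<le> 1" "\<forall>k<N. (\<Sum>j<N. w j k) \<le> 1"
    "\<forall>j<N. cmod (Y $$ (j,j)) \<le> (\<Sum>k<N. w j k * sqrt (Re (B $$ (k,k))))"
    using diag_entry_le_weighted_singular_values[OF Y NM P B YY] by blast
  thus ?thesis unfolding sv(1) sum_mset_map_upt using sv(3)
    by (intro sv_cost_sum_le_doubly_substochastic[OF s0 \<alpha>, where w = w]) auto
qed

section \<open>The objective for diagonal data\<close>

definition frob_inner :: "complex mat \<Rightarrow> complex mat \<Rightarrow> complex" where
  "frob_inner X F = (\<Sum>i<dim_row X. \<Sum>j<dim_col X. X $$ (i,j) * cnj (F $$ (i,j)))"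

lemma frob_sq_diff:
  assumes "X \<in> carrier_mat M N" "F \<in> carrier_mat M N"
  shows "frob_sq (X - F) = frob_sq X - 2 * Re (frob_inner X F) + frob_sq F"
proof -
  have "(cmod (x - f))\<^sup>2 = (cmod x)\<^sup>2 - 2 * Re (x * cnj f) + (cmod f)\<^sup>2" for x f
    unfolding cmod_power2 by (simp add: power2_eq_square algebra_simps)
  thus ?thesis using assms unfolding frob_sq_def frob_inner_def
    by (simp add: sum.distrib sum_subtractf sum_distrib_left Re_sum)
qed

lemma N_F_star_plus_frob_sq:
  assumes "X \<in> carrier_mat M N" "F \<in> carrier_mat M N"
  shows "N_F_star s0 F X + \<alpha>/2 * frob_sq X
     = (\<Sum>s\<in>#singular_values X. sv_cost s0 \<alpha> s) - 2 * Re (frob_inner X F) + frob_sq F"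
proof -
  note sv = singular_values_nonneg_and_frob_sq[of X]
  have "N_F_star s0 F X + \<alpha>/2 * frob_sq X
      = (\<Sum>s\<in>#singular_values X. s0\<^sup>2 - (max (s0 - s) 0)\<^sup>2) + (1 + \<alpha>/2) * frob_sq X
        - 2 * Re (frob_inner X F) + frob_sq F"
    unfolding N_F_star_def frob_sq_diff[OF assms] by (simp add: algebra_simps)
  also have "(\<Sum>s\<in>#singular_values X. s0\<^sup>2 - (max (s0 - s) 0)\<^sup>2) + (1 + \<alpha>/2) * frob_sq X
      = (\<Sum>s\<in>#singular_values X. s0\<^sup>2 - (max (s0 - s) 0)\<^sup>2 + (1 + \<alpha>/2) * s\<^sup>2)"
    unfolding sv(2) sum_mset_distrib_left by (rule sum_mset.distrib[symmetric])
  also have "\<dots> = (\<Sum>s\<in>#singular_values X. sv_cost s0 \<alpha> s)"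
    using sv(1) sv_cost_eq by (metis (no_types, lifting) image_mset_cong)
  finally show ?thesis .
qed

lemma diag_rect_carrier [simp]: "diag_rect M N d \<in> carrier_mat M N"
  unfolding diag_rect_def by auto

lemma mat_adjoint_diag_rect_real:
  "mat_adjoint (diag_rect M N (\<lambda>j. complex_of_real (d j))) = diag_rect N M (\<lambda>j. complex_of_real (d j))"
  unfolding diag_rect_def by (rule eq_matI) auto

lemma singular_values_diag_rect:
  assumes NM: "N \<le> M" and d: "\<And>j. j < N \<Longrightarrow> d j \<ge> 0"
  shows "singular_values (diag_rect M N (\<lambda>j. complex_of_real (d j))) = mset (map d [0..<N])"
proof -
  let ?D = "diag_rect M N (\<lambda>j. complex_of_real (d j))"
  let ?B = "diag_rect N N (\<lambda>j. complex_of_real ((d j)\<^sup>2))"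
  have "mat_adjoint ?D * ?D = ?B"
  proof (rule eq_matI)
    fix k l assume "k < dim_row ?B" "l < dim_col ?B"
    hence kl: "k < N" "l < N" unfolding diag_rect_def by auto
    have "(mat_adjoint ?D * ?D) $$ (k,l) = (\<Sum>i<M. if i = k \<and> i = l then complex_of_real ((d k)\<^sup>2) else 0)"
      using kl NM by (simp add: index_mult_mat_sum diag_rect_def) (intro sum.cong, auto simp: power2_eq_square)
    also have "\<dots> = ?B $$ (k,l)" using kl NM by (simp add: diag_rect_def)
    finally show "(mat_adjoint ?D * ?D) $$ (k,l) = ?B $$ (k,l)" .
  qed (auto simp: diag_rect_def)
  hence "mat_adjoint ?D * ?D = 1\<^sub>m N * ?B * mat_adjoint (1\<^sub>m N)"
    using left_mult_one_mat[OF diag_rect_carrier] right_mult_one_mat[OF diag_rect_carrier] by simp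
  from singular_values_gram_diagonal(1)[OF diag_rect_carrier NM _ _ _ this]
  have "singular_values ?D = mset (map (\<lambda>k. sqrt (Re (?B $$ (k,k)))) [0..<N])"
    by (auto simp: unitary_mat_def diagonal_mat_def diag_rect_def)
  also have "map (\<lambda>k. sqrt (Re (?B $$ (k,k)))) [0..<N] = map d [0..<N]"
    using d by (intro map_cong) (auto simp: diag_rect_def)
  finally show ?thesis .
qed

lemma frob_inner_diag_rect:
  assumes Y: "Y \<in> carrier_mat M N" and NM: "N \<le> M"
  shows "frob_inner Y (diag_rect M N (\<lambda>j. complex_of_real (\<phi> j)))
       = (\<Sum>j<N. complex_of_real (\<phi> j) * Y $$ (j,j))"
proof -
  have "frob_inner Y (diag_rect M N (\<lambda>j. complex_of_real (\<phi> j)))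
      = (\<Sum>i<M. \<Sum>j<N. if i = j then complex_of_real (\<phi> j) * Y $$ (j,j) else 0)"
    unfolding frob_inner_def diag_rect_def using Y by (intro sum.cong) auto
  also have "\<dots> = (\<Sum>j<N. complex_of_real (\<phi> j) * Y $$ (j,j))"
    using NM by (subst sum.swap) (simp add: sum.delta)
  finally show ?thesis .
qed

lemma objective_diag_rect_tall:
  assumes s0: "s0 > 0" and \<alpha>: "\<alpha> \<ge> 0" and NM: "N \<le> M" and \<phi>: "\<And>j. j < N \<Longrightarrow> \<phi> j \<ge> 0"
    and Y: "Y \<in> carrier_mat M N"
  defines "D \<equiv> diag_rect M N (\<lambda>j. complex_of_real (\<phi> j))"
    and "D\<^sub>f \<equiv> diag_rect M N (\<lambda>j. complex_of_real (f_alpha s0 \<alpha> (\<phi> j)))"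
  shows "N_F_star s0 D D\<^sub>f + \<alpha>/2 * frob_sq D\<^sub>f \<le> N_F_star s0 D Y + \<alpha>/2 * frob_sq Y"
proof -
  let ?f = "\<lambda>j. f_alpha s0 \<alpha> (\<phi> j)" and ?y = "\<lambda>j. cmod (Y $$ (j,j))"
  have "N_F_star s0 D D\<^sub>f + \<alpha>/2 * frob_sq D\<^sub>f
      = (\<Sum>j<N. sv_cost s0 \<alpha> (?f j) - 2 * \<phi> j * ?f j) + frob_sq D"
    unfolding N_F_star_plus_frob_sq[OF diag_rect_carrier diag_rect_carrier] D\<^sub>f_def D_def
      singular_values_diag_rect[OF NM f_alpha_nonneg[OF s0 \<alpha>]] sum_mset_map_upt
      frob_inner_diag_rect[OF diag_rect_carrier NM]
    using NM by (simp add: Re_sum diag_rect_def sum_subtractf sum_distrib_left algebra_simps)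
  also have "\<dots> \<le> (\<Sum>j<N. sv_cost s0 \<alpha> (?y j) - 2 * \<phi> j * ?y j) + frob_sq D"
    using f_alpha_minimises[OF s0 \<alpha>] by (simp add: sum_mono)
  also have "\<dots> \<le> (\<Sum>s\<in>#singular_values Y. sv_cost s0 \<alpha> s) - 2 * Re (frob_inner Y D) + frob_sq D"
  proof -
    have "Re (frob_inner Y D) \<le> (\<Sum>j<N. \<phi> j * ?y j)"
      unfolding D_def frob_inner_diag_rect[OF Y NM] Re_sum
      using \<phi> by (intro sum_mono) (auto intro!: mult_left_mono complex_Re_le_cmod)
    moreover have "(\<Sum>j<N. sv_cost s0 \<alpha> (?y j) - 2 * \<phi> j * ?y j)
        = (\<Sum>j<N. sv_cost s0 \<alpha> (?y j)) - 2 * (\<Sum>j<N. \<phi> j * ?y j)"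
      by (simp add: sum_subtractf sum_distrib_left mult.assoc)
    ultimately show ?thesis using sv_cost_diag_le_singular_values[OF Y NM s0 \<alpha>] by linarith
  qed
  also have "\<dots> = N_F_star s0 D Y + \<alpha>/2 * frob_sq Y"
    unfolding D_def by (rule N_F_star_plus_frob_sq[OF Y diag_rect_carrier, symmetric])
  finally show ?thesis .
qed

lemma N_F_star_adjoint:
  assumes "X \<in> carrier_mat M N" "F \<in> carrier_mat M N" "M < N"
  shows "N_F_star s0 (mat_adjoint F) (mat_adjoint X) = N_F_star s0 F X"
  unfolding N_F_star_def singular_values_adjoint[OF assms(1,3)]
    mat_adjoint_minus[OF assms(1,2), symmetric] frob_sq_adjoint ..

lemma objective_diag_rect:
  assumes s0: "s0 > 0" and \<alpha>: "\<alpha> \<ge> 0" and \<phi>: "\<And>j. j < min M N \<Longrightarrow> \<phi> j \<ge> 0"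
    and Y: "Y \<in> carrier_mat M N"
  defines "D \<equiv> diag_rect M N (\<lambda>j. complex_of_real (\<phi> j))"
    and "D\<^sub>f \<equiv> diag_rect M N (\<lambda>j. complex_of_real (f_alpha s0 \<alpha> (\<phi> j)))"
  shows "N_F_star s0 D D\<^sub>f + \<alpha>/2 * frob_sq D\<^sub>f \<le> N_F_star s0 D Y + \<alpha>/2 * frob_sq Y"
proof (cases "N \<le> M")
  case True
  thus ?thesis using objective_diag_rect_tall[OF s0 \<alpha> True _ Y] \<phi> unfolding D_def D\<^sub>f_def by simp
next
  case False
  hence MN: "M < N" by simp
  have "N_F_star s0 (mat_adjoint D) (mat_adjoint D\<^sub>f) + \<alpha>/2 * frob_sq (mat_adjoint D\<^sub>f)
      \<le> N_F_star s0 (mat_adjoint D) (mat_adjoint Y) + \<alpha>/2 * frob_sq (mat_adjoint Y)"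
    using objective_diag_rect_tall[OF s0 \<alpha> _ _ mat_adjoint_carrier_iff[THEN iffD2, OF Y]] False \<phi>
    unfolding D_def D\<^sub>f_def mat_adjoint_diag_rect_real by simp
  thus ?thesis unfolding D_def D\<^sub>f_def
    using N_F_star_adjoint[OF Y diag_rect_carrier MN] N_F_star_adjoint[OF diag_rect_carrier diag_rect_carrier MN]
    by (simp add: frob_sq_adjoint)
qed

section \<open>Unitary invariance\<close>

lemma gram_unitary_equiv:
  assumes U: "unitary_mat M U" and V: "V \<in> carrier_mat N N" and Y: "Y \<in> carrier_mat M N"
  shows "mat_adjoint (U * Y * mat_adjoint V) * (U * Y * mat_adjoint V) = V * (mat_adjoint Y * Y) * mat_adjoint V"
proof -
  have c: "U \<in> carrier_mat M M" "mat_adjoint U \<in> carrier_mat M M" "mat_adjoint V \<in> carrier_mat N N"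
    "mat_adjoint Y \<in> carrier_mat N M" using U V Y unfolding unitary_mat_def by auto
  have "mat_adjoint (U * Y * mat_adjoint V) * (U * Y * mat_adjoint V)
      = V * (mat_adjoint Y * (mat_adjoint U * U) * Y) * mat_adjoint V"
    unfolding mat_adjoint_mult_mult_adjoint[OF c(1) Y V] using c V Y
    by (simp add: assoc_mult_mat[of _ N N _ M _ N] assoc_mult_mat[of _ N M _ M _ N]
      assoc_mult_mat[of _ N N _ M _ M] assoc_mult_mat[of _ N M _ M _ M] assoc_mult_mat[of _ M M _ M _ N]
      assoc_mult_mat[of _ N N _ N _ N] assoc_mult_mat[of _ M M _ N _ N] assoc_mult_mat[of _ N M _ N _ N])
  thus ?thesis using U c unfolding unitary_mat_def by simp
qed

lemma singular_values_unitary_mult_tall: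
  assumes U: "unitary_mat M U" and V: "unitary_mat N V" and Y: "Y \<in> carrier_mat M N" and NM: "N \<le> M"
  shows "singular_values (U * Y * mat_adjoint V) = singular_values Y"
proof -
  have Vc: "V \<in> carrier_mat N N" "U \<in> carrier_mat M M" using U V unfolding unitary_mat_def by auto
  have "similar_mat (mat_adjoint (U * Y * mat_adjoint V) * (U * Y * mat_adjoint V)) (mat_adjoint Y * Y)"
    unfolding gram_unitary_equiv[OF U Vc(1) Y] using Y by (intro similar_mat_unitary_conj[OF V]) auto
  thus ?thesis unfolding singular_values_def using Y Vc NM by (simp add: char_poly_similar)
qed

lemma singular_values_unitary_mult:
  assumes U: "unitary_mat M U" and V: "unitary_mat N V" and Y: "Y \<in> carrier_mat M N"
  shows "singular_values (U * Y * mat_adjoint V) = singular_values Y"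
proof (cases "N \<le> M")
  case True
  thus ?thesis by (rule singular_values_unitary_mult_tall[OF U V Y])
next
  case False
  have c: "U \<in> carrier_mat M M" "V \<in> carrier_mat N N" using U V unfolding unitary_mat_def by auto
  have UYV: "U * Y * mat_adjoint V \<in> carrier_mat M N" using c Y by auto
  have "singular_values (U * Y * mat_adjoint V) = singular_values (V * mat_adjoint Y * mat_adjoint U)"
    using singular_values_adjoint[OF UYV] False mat_adjoint_mult_mult_adjoint[OF c(1) Y c(2)] by simp
  also have "\<dots> = singular_values (mat_adjoint Y)"
    using singular_values_unitary_mult_tall[OF V U _ ] Y False by simp
  also have "\<dots> = singular_values Y" using singular_values_adjoint[OF Y] False by simp
  finally show ?thesis .
qed

lemma N_F_star_unitary_mult:
  assumes U: "unitary_mat M U" and V: "unitary_mat N V"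
    and Y: "Y \<in> carrier_mat M N" and F: "F \<in> carrier_mat M N"
  shows "N_F_star s0 (U * F * mat_adjoint V) (U * Y * mat_adjoint V) = N_F_star s0 F Y"
    and "frob_sq (U * Y * mat_adjoint V) = frob_sq Y"
proof -
  have frob: "frob_sq (U * Z * mat_adjoint V) = frob_sq Z" if "Z \<in> carrier_mat M N" for Z
    using singular_values_unitary_mult[OF U V that] singular_values_nonneg_and_frob_sq(2) by metis
  thus "frob_sq (U * Y * mat_adjoint V) = frob_sq Y" using Y .
  have c: "U \<in> carrier_mat M M" "mat_adjoint V \<in> carrier_mat N N" using U V unfolding unitary_mat_def by auto
  have "U * Y * mat_adjoint V - U * F * mat_adjoint V = U * (Y - F) * mat_adjoint V"
    using c Y F by (simp add: mult_minus_distrib_mat minus_mult_distrib_mat[of _ M N])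
  thus "N_F_star s0 (U * F * mat_adjoint V) (U * Y * mat_adjoint V) = N_F_star s0 F Y"
    unfolding N_F_star_def using singular_values_unitary_mult[OF U V Y] frob[OF minus_carrier_mat[OF F]] Y F by simp
qed

lemma unitary_mult_adjoint_cancel:
  assumes "unitary_mat M U" "unitary_mat N V" "X \<in> carrier_mat M N"
  shows "U * (mat_adjoint U * X * V) * mat_adjoint V = X"
proof -
  have c: "U \<in> carrier_mat M M" "mat_adjoint U \<in> carrier_mat M M" "V \<in> carrier_mat N N"
    "mat_adjoint V \<in> carrier_mat N N" using assms unfolding unitary_mat_def by auto
  have "U * (mat_adjoint U * X * V) * mat_adjoint V = (U * mat_adjoint U) * X * (V * mat_adjoint V)"
    using c assms by (simp add: assoc_mult_mat[of _ M M _ M _ N] assoc_mult_mat[of _ M M _ N _ N]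
      assoc_mult_mat[of _ M N _ N _ N])
  thus ?thesis using assms unitary_mat_right_inverse by simp
qed

theorem proposition3:
  fixes M N :: nat and s0 \<alpha> :: real and F U V :: "complex mat" and \<phi> :: "nat \<Rightarrow> real"
  assumes "s0 > 0" and "\<alpha> \<ge> 0"
    and "is_svd M N F U \<phi> V"
  shows "\<forall>X \<in> carrier_mat M N.
           N_F_star s0 F (S_fun M N (\<lambda>x. complex_of_real (f_alpha s0 \<alpha> x)) U \<phi> V)
             + \<alpha>/2 * frob_sq (S_fun M N (\<lambda>x. complex_of_real (f_alpha s0 \<alpha> x)) U \<phi> V)
           \<le> N_F_star s0 F X + \<alpha>/2 * frob_sq X"
proof
  fix X :: "complex mat" assume X: "X \<in> carrier_mat M N"
  from assms(3) have U: "unitary_mat M U" and V: "unitary_mat N V" and \<phi>: "\<forall>j < min M N. \<phi> j \<ge> 0"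
    and F: "F = U * diag_rect M N (\<lambda>j. complex_of_real (\<phi> j)) * mat_adjoint V"
    unfolding is_svd_def by auto
  define Y where "Y = mat_adjoint U * X * V"
  have Y: "Y \<in> carrier_mat M N" using X U V unfolding Y_def unitary_mat_def by auto
  have XY: "X = U * Y * mat_adjoint V" unfolding Y_def using unitary_mult_adjoint_cancel[OF U V X] ..
  note invariance = N_F_star_unitary_mult[OF U V _ diag_rect_carrier]
  show "N_F_star s0 F (S_fun M N (\<lambda>x. complex_of_real (f_alpha s0 \<alpha> x)) U \<phi> V)
      + \<alpha>/2 * frob_sq (S_fun M N (\<lambda>x. complex_of_real (f_alpha s0 \<alpha> x)) U \<phi> V)
    \<le> N_F_star s0 F X + \<alpha>/2 * frob_sq X"
    unfolding S_fun_def F XY invariance[OF diag_rect_carrier] invariance[OF Y]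
    using objective_diag_rect[OF assms(1,2) _ Y] \<phi> by simp
qed

end
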